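(* Let $\mathcal K$ be a 2-category which admits Eilenberg–Moore constructions for monads, and let $(V,\psi):(t,\mu,\eta)\to(t',\mu',\eta')$ be a 1-cell in $\mathrm{EM}^w(\mathcal K)$. Then the 2-cell $Vv\epsilon\ast\psi v\ast\eta'Vv:Vv\Rightarrow Vv$ in $\mathcal K$ is idempotent, and the identities $V\mu\ast\psi t\ast\eta'Vt\ast\psi=\psi$ and $Vv\epsilon\ast\psi v\ast t'Vv\epsilon\ast t'\psi v\ast t'\eta'Vv=Vv\epsilon\ast\psi v$ hold.
   Context: Conventions in a 2-category $\mathcal K$: horizontal composition and whiskering by juxtaposition in the order of functor composition; identity 1-cell of $k$ written $k$, identity 2-cell of $V$ written $V$; vertical composition $\ast$ with $\alpha\ast\beta$ meaning $\beta$ then $\alpha$. A monad $(t,\mu,\eta)$ on $k$: $t:k\to k$, $\mu:tt\Rightarrow t$, $\eta:k\Rightarrow t$, associative and unital. A 1-cell $(t,\mu,\eta)\to(t',\mu',\eta')$ in $\mathrm{EM}^w(\mathcal K)$ ($t$ on $k$, $t'$ on $k'$) is a pair $(V,\psi)$ with $V:k\to k'$ and $\psi:t'V\Rightarrow Vt$ satisfying $V\mu\ast\psi t\ast t'\psi=\psi\ast\mu'V$. $\mathcal K$ admits Eilenberg–Moore constructions for monads means: the inclusion 2-functor from $\mathcal K$ into the Lack–Street 2-category $\mathrm{EM}(\mathcal K)$ of monads has a right 2-adjoint $J$. Consequently every monad $(t,\mu,\eta)$ on $k$ determines an adjunction $f\dashv v$ in $\mathcal K$ with $f:k\to J(t)$,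 $v:J(t)\to k$, unit $\eta:k\Rightarrow vf$ and counit $\epsilon:fv\Rightarrow J(t)$, such that $t=vf$ and $\mu=v\epsilon f$. For $t'$ the corresponding data are $f',v',\eta',\epsilon'$. *)

theory Defs
  imports Main
begin

text \<open>Conventions:
  cmp K g f    : composite of f : a -> b followed by g : b -> c (written g f);
  ide K a      : identity 1-cell of the object a;
  vcmp K a b   : vertical composite a * b (first b, then a);
  idc K f      : identity 2-cell of the 1-cell f;
  hcmp K b a   : horizontal composite (a : f => f' with f,f' : x -> y,
                 b : g => g' with g,g' : y -> z; result g f => g' f').\<close>

record ('o, 'm, 'c) two_cat =
  Ob   :: "'o set"
  Hom  :: "'o \<Rightarrow> 'o \<Rightarrow> 'm set"
  Cell :: "'m \<Rightarrow> 'm \<Rightarrow> 'c set"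
  cmp  :: "'m \<Rightarrow> 'm \<Rightarrow> 'm"
  ide  :: "'o \<Rightarrow> 'm"
  vcmp :: "'c \<Rightarrow> 'c \<Rightarrow> 'c"
  idc  :: "'m \<Rightarrow> 'c"
  hcmp :: "'c \<Rightarrow> 'c \<Rightarrow> 'c"

definition two_category :: "('o, 'm, 'c, 'x) two_cat_scheme \<Rightarrow> bool" where
  "two_category K \<longleftrightarrow>
    \<comment> \<open>underlying category of objects and 1-cells\<close>
    (\<forall>a b f. f \<in> Hom K a b \<longrightarrow> a \<in> Ob K \<and> b \<in> Ob K) \<and>
    (\<forall>a b a' b' f. f \<in> Hom K a b \<longrightarrow> f \<in> Hom K a' b' \<longrightarrow> a = a' \<and> b = b') \<and>
    (\<forall>a. a \<in> Ob K \<longrightarrow> ide K a \<in> Hom K a a) \<and>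
    (\<forall>a b c f g. f \<in> Hom K a b \<longrightarrow> g \<in> Hom K b c \<longrightarrow> cmp K g f \<in> Hom K a c) \<and>
    (\<forall>a b f. f \<in> Hom K a b \<longrightarrow> cmp K f (ide K a) = f \<and> cmp K (ide K b) f = f) \<and>
    (\<forall>a b c d f g h. f \<in> Hom K a b \<longrightarrow> g \<in> Hom K b c \<longrightarrow> h \<in> Hom K c d \<longrightarrow>
        cmp K h (cmp K g f) = cmp K (cmp K h g) f) \<and>
    \<comment> \<open>2-cells: vertical categories on each hom\<close>
    (\<forall>f g \<alpha>. \<alpha> \<in> Cell K f g \<longrightarrow> (\<exists>a b. f \<in> Hom K a b \<and> g \<in> Hom K a b)) \<and>
    (\<forall>f g f' g' \<alpha>. \<alpha> \<in> Cell K f g \<longrightarrow> \<alpha> \<in> Cell K f' g' \<longrightarrow> f = f' \<and> g = g') \<and>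
    (\<forall>a b f. f \<in> Hom K a b \<longrightarrow> idc K f \<in> Cell K f f) \<and>
    (\<forall>f g h \<alpha> \<beta>. \<alpha> \<in> Cell K f g \<longrightarrow> \<beta> \<in> Cell K g h \<longrightarrow> vcmp K \<beta> \<alpha> \<in> Cell K f h) \<and>
    (\<forall>f g \<alpha>. \<alpha> \<in> Cell K f g \<longrightarrow> vcmp K \<alpha> (idc K f) = \<alpha> \<and> vcmp K (idc K g) \<alpha> = \<alpha>) \<and>
    (\<forall>f g h i \<alpha> \<beta> \<gamma>. \<alpha> \<in> Cell K f g \<longrightarrow> \<beta> \<in> Cell K g h \<longrightarrow> \<gamma> \<in> Cell K h i \<longrightarrow>
        vcmp K \<gamma> (vcmp K \<beta> \<alpha>) = vcmp K (vcmp K \<gamma> \<beta>) \<alpha>) \<and>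
    \<comment> \<open>horizontal composition\<close>
    (\<forall>a b c f f' g g' \<alpha> \<beta>. f \<in> Hom K a b \<longrightarrow> g \<in> Hom K b c \<longrightarrow>
        \<alpha> \<in> Cell K f f' \<longrightarrow> \<beta> \<in> Cell K g g' \<longrightarrow>
        hcmp K \<beta> \<alpha> \<in> Cell K (cmp K g f) (cmp K g' f')) \<and>
    (\<forall>a b c f g. f \<in> Hom K a b \<longrightarrow> g \<in> Hom K b c \<longrightarrow>
        hcmp K (idc K g) (idc K f) = idc K (cmp K g f)) \<and>
    (\<forall>a b c f f' f'' g g' g'' \<alpha> \<alpha>' \<beta> \<beta>'. f \<in> Hom K a b \<longrightarrow> g \<in> Hom K b c \<longrightarrow>
        \<alpha> \<in> Cell K f f' \<longrightarrow> \<alpha>' \<in> Cell K f' f'' \<longrightarrow>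
        \<beta> \<in> Cell K g g' \<longrightarrow> \<beta>' \<in> Cell K g' g'' \<longrightarrow>
        hcmp K (vcmp K \<beta>' \<beta>) (vcmp K \<alpha>' \<alpha>) = vcmp K (hcmp K \<beta>' \<alpha>') (hcmp K \<beta> \<alpha>)) \<and>
    (\<forall>a b f f' \<alpha>. f \<in> Hom K a b \<longrightarrow> \<alpha> \<in> Cell K f f' \<longrightarrow>
        hcmp K \<alpha> (idc K (ide K a)) = \<alpha> \<and> hcmp K (idc K (ide K b)) \<alpha> = \<alpha>) \<and>
    (\<forall>a b c d f f' g g' h h' \<alpha> \<beta> \<gamma>. f \<in> Hom K a b \<longrightarrow> g \<in> Hom K b c \<longrightarrow> h \<in> Hom K c d \<longrightarrow>
        \<alpha> \<in> Cell K f f' \<longrightarrow> \<beta> \<in> Cell K g g' \<longrightarrow> \<gamma> \<in> Cell K h h' \<longrightarrow>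
        hcmp K \<gamma> (hcmp K \<beta> \<alpha>) = hcmp K (hcmp K \<gamma> \<beta>) \<alpha>)"

definition wl :: "('o, 'm, 'c, 'x) two_cat_scheme \<Rightarrow> 'm \<Rightarrow> 'c \<Rightarrow> 'c" where
  "wl K f \<alpha> = hcmp K (idc K f) \<alpha>"

definition wr :: "('o, 'm, 'c, 'x) two_cat_scheme \<Rightarrow> 'c \<Rightarrow> 'm \<Rightarrow> 'c" where
  "wr K \<alpha> f = hcmp K \<alpha> (idc K f)"

definition monad :: "('o, 'm, 'c, 'x) two_cat_scheme \<Rightarrow> 'o \<Rightarrow> 'm \<Rightarrow> 'c \<Rightarrow> 'c \<Rightarrow> bool" where
  "monad K k t \<mu> \<eta> \<longleftrightarrow>
    k \<in> Ob K \<and> t \<in> Hom K k k \<and>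
    \<mu> \<in> Cell K (cmp K t t) t \<and> \<eta> \<in> Cell K (ide K k) t \<and>
    vcmp K \<mu> (wl K t \<mu>) = vcmp K \<mu> (wr K \<mu> t) \<and>
    vcmp K \<mu> (wl K t \<eta>) = idc K t \<and>
    vcmp K \<mu> (wr K \<eta> t) = idc K t"

definition EMw_1cell ::
  "('o, 'm, 'c, 'x) two_cat_scheme \<Rightarrow> 'o \<Rightarrow> 'm \<Rightarrow> 'c \<Rightarrow> 'c \<Rightarrow>
   'o \<Rightarrow> 'm \<Rightarrow> 'c \<Rightarrow> 'c \<Rightarrow> 'm \<Rightarrow> 'c \<Rightarrow> bool" where
  "EMw_1cell K k t \<mu> \<eta> k' t' \<mu>' \<eta>' V \<psi> \<longleftrightarrow>
    monad K k t \<mu> \<eta> \<and> monad K k' t' \<mu>' \<eta>' \<and>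
    V \<in> Hom K k k' \<and> \<psi> \<in> Cell K (cmp K t' V) (cmp K V t) \<and>
    vcmp K (wl K V \<mu>) (vcmp K (wr K \<psi> t) (wl K t' \<psi>)) = vcmp K \<psi> (wr K \<mu>' V)"

definition adjunction ::
  "('o, 'm, 'c, 'x) two_cat_scheme \<Rightarrow> 'o \<Rightarrow> 'o \<Rightarrow> 'm \<Rightarrow> 'm \<Rightarrow> 'c \<Rightarrow> 'c \<Rightarrow> bool" where
  "adjunction K k j f v \<eta> \<epsilon> \<longleftrightarrow>
    f \<in> Hom K k j \<and> v \<in> Hom K j k \<and>
    \<eta> \<in> Cell K (ide K k) (cmp K v f) \<and> \<epsilon> \<in> Cell K (cmp K f v) (ide K j) \<and>
    vcmp K (wr K \<epsilon> f) (wl K f \<eta>) = idc K f \<and>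
    vcmp K (wl K v \<epsilon>) (wr K \<eta> v) = idc K v"

definition idempotent_2cell :: "('o, 'm, 'c, 'x) two_cat_scheme \<Rightarrow> 'm \<Rightarrow> 'c \<Rightarrow> bool" where
  "idempotent_2cell K g e \<longleftrightarrow> e \<in> Cell K g g \<and> vcmp K e e = e"

end

theory Submission
  imports Defs
begin

text \<open>Put \<open>W = V v\<close> and \<open>\<theta> = W\<epsilon> \<ast> \<psi>v : t'W \<Rightarrow> W\<close>. Whiskering the
  \<open>EM\<^sup>w\<close> law of \<open>(V,\<psi>)\<close> by \<open>v\<close>, and using \<open>(V\<mu>)v = (W\<epsilon>)F\<close> (\<open>F = f v\<close>) together with
  the interchange \<open>\<epsilon> \<ast> \<epsilon>F = \<epsilon> \<ast> F\<epsilon>\<close>, shows that \<open>\<theta>\<close> is an associative action: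
  \<open>\<theta> \<ast> t'\<theta> = \<theta> \<ast> \<mu>'W\<close>. For any \<open>\<phi> \<ast> t'\<psi> = \<psi> \<ast> \<mu>'U\<close>, moving \<open>\<eta>'\<close> past \<open>\<psi>\<close>
  and using \<open>\<mu>' \<ast> \<eta>'t' = 1\<close> gives \<open>\<phi> \<ast> \<eta>'X \<ast> \<psi> = \<psi>\<close>. Applied to \<open>\<theta>\<close> this yields
  \<open>\<theta> \<ast> \<eta>'W \<ast> \<theta> = \<theta>\<close>, hence idempotency of \<open>\<theta> \<ast> \<eta>'W\<close>; applied to the \<open>EM\<^sup>w\<close>
  law itself it is the second identity. The third is \<open>\<theta> \<ast> t'\<theta> \<ast> t'\<eta>'W = \<theta>\<close>,
  from associativity and \<open>\<mu>' \<ast> t'\<eta>' = 1\<close>.\<close>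

locale strict_2cat =
  fixes K :: "('o, 'm, 'c, 'x) two_cat_scheme"
  assumes two_category: "two_category K"
begin

lemma hom_ob: "f \<in> Hom K a b \<Longrightarrow> a \<in> Ob K \<and> b \<in> Ob K"
  using two_category unfolding two_category_def by meson

lemma ide_hom: "a \<in> Ob K \<Longrightarrow> ide K a \<in> Hom K a a"
  using two_category unfolding two_category_def by meson

lemma cmp_hom: "f \<in> Hom K a b \<Longrightarrow> g \<in> Hom K b c \<Longrightarrow> cmp K g f \<in> Hom K a c"
  using two_category unfolding two_category_def by meson

lemma cmp_ide_right: "f \<in> Hom K a b \<Longrightarrow> cmp K f (ide K a) = f"
  using two_category unfolding two_category_def by meson

lemma cmp_ide_left: "f \<in> Hom K a b \<Longrightarrow> cmp K (ide K b) f = f"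
  using two_category unfolding two_category_def by meson

lemma cmp_assoc:
  "f \<in> Hom K a b \<Longrightarrow> g \<in> Hom K b c \<Longrightarrow> h \<in> Hom K c d \<Longrightarrow>
   cmp K h (cmp K g f) = cmp K (cmp K h g) f"
  using two_category unfolding two_category_def by meson

lemma hom_unique: "f \<in> Hom K a b \<Longrightarrow> f \<in> Hom K a' b' \<Longrightarrow> a = a' \<and> b = b'"
  using two_category unfolding two_category_def by meson

lemma cell_homs: "\<alpha> \<in> Cell K f g \<Longrightarrow> \<exists>a b. f \<in> Hom K a b \<and> g \<in> Hom K a b"
  using two_category unfolding two_category_def by meson

lemma cell_target_hom: "\<alpha> \<in> Cell K f g \<Longrightarrow> f \<in> Hom K a b \<Longrightarrow> g \<in> Hom K a b"
  using cell_homs hom_unique by metis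

lemma idc_cell: "f \<in> Hom K a b \<Longrightarrow> idc K f \<in> Cell K f f"
  using two_category unfolding two_category_def by meson

lemma vcmp_cell: "\<alpha> \<in> Cell K f g \<Longrightarrow> \<beta> \<in> Cell K g h \<Longrightarrow> vcmp K \<beta> \<alpha> \<in> Cell K f h"
  using two_category unfolding two_category_def by meson

lemma vcmp_idc_right: "\<alpha> \<in> Cell K f g \<Longrightarrow> vcmp K \<alpha> (idc K f) = \<alpha>"
  using two_category unfolding two_category_def by meson

lemma vcmp_idc_left: "\<alpha> \<in> Cell K f g \<Longrightarrow> vcmp K (idc K g) \<alpha> = \<alpha>"
  using two_category unfolding two_category_def by meson

lemma vcmp_assoc:
  "\<alpha> \<in> Cell K f g \<Longrightarrow> \<beta> \<in> Cell K g h \<Longrightarrow> \<gamma> \<in> Cell K h i \<Longrightarrow>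
   vcmp K \<gamma> (vcmp K \<beta> \<alpha>) = vcmp K (vcmp K \<gamma> \<beta>) \<alpha>"
  using two_category unfolding two_category_def by meson

lemma hcmp_cell:
  "f \<in> Hom K a b \<Longrightarrow> g \<in> Hom K b c \<Longrightarrow> \<alpha> \<in> Cell K f f' \<Longrightarrow> \<beta> \<in> Cell K g g' \<Longrightarrow>
   hcmp K \<beta> \<alpha> \<in> Cell K (cmp K g f) (cmp K g' f')"
  using two_category unfolding two_category_def by meson

lemma hcmp_idc:
  "f \<in> Hom K a b \<Longrightarrow> g \<in> Hom K b c \<Longrightarrow> hcmp K (idc K g) (idc K f) = idc K (cmp K g f)"
  using two_category unfolding two_category_def by meson

lemma interchange:
  "f \<in> Hom K a b \<Longrightarrow> g \<in> Hom K b c \<Longrightarrow>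
   \<alpha> \<in> Cell K f f' \<Longrightarrow> \<alpha>' \<in> Cell K f' f'' \<Longrightarrow> \<beta> \<in> Cell K g g' \<Longrightarrow> \<beta>' \<in> Cell K g' g'' \<Longrightarrow>
   hcmp K (vcmp K \<beta>' \<beta>) (vcmp K \<alpha>' \<alpha>) = vcmp K (hcmp K \<beta>' \<alpha>') (hcmp K \<beta> \<alpha>)"
  using two_category unfolding two_category_def by meson

lemma hcmp_ide_right: "f \<in> Hom K a b \<Longrightarrow> \<alpha> \<in> Cell K f f' \<Longrightarrow> hcmp K \<alpha> (idc K (ide K a)) = \<alpha>"
  using two_category unfolding two_category_def by meson

lemma hcmp_ide_left: "f \<in> Hom K a b \<Longrightarrow> \<alpha> \<in> Cell K f f' \<Longrightarrow> hcmp K (idc K (ide K b)) \<alpha> = \<alpha>"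
  using two_category unfolding two_category_def by meson

lemma hcmp_assoc:
  "f \<in> Hom K a b \<Longrightarrow> g \<in> Hom K b c \<Longrightarrow> h \<in> Hom K c d \<Longrightarrow>
   \<alpha> \<in> Cell K f f' \<Longrightarrow> \<beta> \<in> Cell K g g' \<Longrightarrow> \<gamma> \<in> Cell K h h' \<Longrightarrow>
   hcmp K \<gamma> (hcmp K \<beta> \<alpha>) = hcmp K (hcmp K \<gamma> \<beta>) \<alpha>"
  using two_category unfolding two_category_def by meson

lemma wl_cell:
  "g \<in> Hom K b c \<Longrightarrow> f \<in> Hom K a b \<Longrightarrow> \<alpha> \<in> Cell K f f' \<Longrightarrow>
   wl K g \<alpha> \<in> Cell K (cmp K g f) (cmp K g f')"
  unfolding wl_def by (rule hcmp_cell[OF _ _ _ idc_cell])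

lemma wr_cell:
  "f \<in> Hom K a b \<Longrightarrow> g \<in> Hom K b c \<Longrightarrow> \<beta> \<in> Cell K g g' \<Longrightarrow>
   wr K \<beta> f \<in> Cell K (cmp K g f) (cmp K g' f)"
  unfolding wr_def by (rule hcmp_cell[OF _ _ idc_cell])

lemma wl_ide: "f \<in> Hom K a b \<Longrightarrow> \<alpha> \<in> Cell K f f' \<Longrightarrow> wl K (ide K b) \<alpha> = \<alpha>"
  unfolding wl_def by (rule hcmp_ide_left)

lemma wr_ide: "f \<in> Hom K a b \<Longrightarrow> \<alpha> \<in> Cell K f f' \<Longrightarrow> wr K \<alpha> (ide K a) = \<alpha>"
  unfolding wr_def by (rule hcmp_ide_right)

lemma wr_idc: "f \<in> Hom K a b \<Longrightarrow> g \<in> Hom K b c \<Longrightarrow> wr K (idc K g) f = idc K (cmp K g f)"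
  unfolding wr_def by (rule hcmp_idc)

lemma wl_cmp:
  "h \<in> Hom K c d \<Longrightarrow> g \<in> Hom K b c \<Longrightarrow> f \<in> Hom K a b \<Longrightarrow> \<alpha> \<in> Cell K f f' \<Longrightarrow>
   wl K (cmp K h g) \<alpha> = wl K h (wl K g \<alpha>)"
  unfolding wl_def by (simp add: hcmp_idc[symmetric] hcmp_assoc[OF _ _ _ _ idc_cell idc_cell])

lemma wr_cmp:
  "f \<in> Hom K a b \<Longrightarrow> g \<in> Hom K b c \<Longrightarrow> h \<in> Hom K c d \<Longrightarrow> \<alpha> \<in> Cell K h h' \<Longrightarrow>
   wr K \<alpha> (cmp K g f) = wr K (wr K \<alpha> g) f"
  unfolding wr_def by (simp add: hcmp_idc[symmetric] hcmp_assoc[OF _ _ _ idc_cell idc_cell])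

lemma wl_wr:
  "f \<in> Hom K a b \<Longrightarrow> g \<in> Hom K b c \<Longrightarrow> h \<in> Hom K c d \<Longrightarrow> \<alpha> \<in> Cell K g g' \<Longrightarrow>
   wl K h (wr K \<alpha> f) = wr K (wl K h \<alpha>) f"
  unfolding wr_def wl_def by (simp add: hcmp_assoc[OF _ _ _ idc_cell _ idc_cell])

lemma wl_vcmp:
  assumes g: "g \<in> Hom K b c" and f: "f \<in> Hom K a b"
    and \<alpha>: "\<alpha> \<in> Cell K f f'" and \<alpha>': "\<alpha>' \<in> Cell K f' f''"
  shows "wl K g (vcmp K \<alpha>' \<alpha>) = vcmp K (wl K g \<alpha>') (wl K g \<alpha>)"
  using interchange[OF f g \<alpha> \<alpha>' idc_cell[OF g] idc_cell[OF g]]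
  unfolding wl_def by (simp add: vcmp_idc_right[OF idc_cell[OF g]])

lemma wr_vcmp:
  assumes f: "f \<in> Hom K a b" and g: "g \<in> Hom K b c"
    and \<beta>: "\<beta> \<in> Cell K g g'" and \<beta>': "\<beta>' \<in> Cell K g' g''"
  shows "wr K (vcmp K \<beta>' \<beta>) f = vcmp K (wr K \<beta>' f) (wr K \<beta> f)"
  using interchange[OF f g idc_cell[OF f] idc_cell[OF f] \<beta> \<beta>']
  unfolding wr_def by (simp add: vcmp_idc_right[OF idc_cell[OF f]])

lemma whisker_exchange:
  assumes f: "f \<in> Hom K a b" and g: "g \<in> Hom K b c"
    and \<alpha>: "\<alpha> \<in> Cell K f f'" and \<beta>: "\<beta> \<in> Cell K g g'"
  shows "vcmp K (wl K g' \<alpha>) (wr K \<beta> f) = vcmp K (wr K \<beta> f') (wl K g \<alpha>)"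
proof -
  have f': "f' \<in> Hom K a b" and g': "g' \<in> Hom K b c"
    using cell_target_hom \<alpha> \<beta> f g by blast+
  have "vcmp K (wl K g' \<alpha>) (wr K \<beta> f) = hcmp K \<beta> \<alpha>"
    using interchange[OF f g idc_cell[OF f] \<alpha> \<beta> idc_cell[OF g']]
    unfolding wl_def wr_def by (simp add: vcmp_idc_right[OF \<alpha>] vcmp_idc_left[OF \<beta>])
  also have "\<dots> = vcmp K (wr K \<beta> f') (wl K g \<alpha>)"
    using interchange[OF f g \<alpha> idc_cell[OF f'] idc_cell[OF g] \<beta>]
    unfolding wl_def wr_def by (simp add: vcmp_idc_left[OF \<alpha>] vcmp_idc_right[OF \<beta>])
  finally show ?thesis .
qed

lemma wr_unit_cell:
  "W \<in> Hom K a b \<Longrightarrow> \<eta> \<in> Cell K (ide K b) t \<Longrightarrow> wr K \<eta> W \<in> Cell K W (cmp K t W)"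
  using wr_cell[OF _ ide_hom] hom_ob cmp_ide_left by metis

lemma wl_counit_cell:
  "W \<in> Hom K b c \<Longrightarrow> F \<in> Hom K a b \<Longrightarrow> \<epsilon> \<in> Cell K F (ide K b) \<Longrightarrow>
   wl K W \<epsilon> \<in> Cell K (cmp K W F) W"
  using wl_cell cmp_ide_right by metis

lemma vcmp_assoc_subst:
  assumes eq: "vcmp K \<beta> \<alpha> = vcmp K \<delta> \<gamma>" and \<rho>: "\<rho> \<in> Cell K e f"
    and "\<alpha> \<in> Cell K f g" "\<beta> \<in> Cell K g h" "\<gamma> \<in> Cell K f g'" "\<delta> \<in> Cell K g' h"
  shows "vcmp K \<beta> (vcmp K \<alpha> \<rho>) = vcmp K \<delta> (vcmp K \<gamma> \<rho>)"
  using vcmp_assoc[OF \<rho>] assms by metis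

lemma idempotent_2cell_vcmp:
  assumes \<alpha>: "\<alpha> \<in> Cell K X W" and \<beta>: "\<beta> \<in> Cell K W X"
    and retract: "vcmp K \<alpha> (vcmp K \<beta> \<alpha>) = \<alpha>"
  shows "idempotent_2cell K W (vcmp K \<alpha> \<beta>)"
proof -
  have "vcmp K (vcmp K \<alpha> \<beta>) (vcmp K \<alpha> \<beta>) = vcmp K (vcmp K \<alpha> (vcmp K \<beta> \<alpha>)) \<beta>"
    using vcmp_assoc[OF vcmp_cell[OF \<beta> \<alpha>] \<beta> \<alpha>] vcmp_assoc[OF \<beta> \<alpha> \<beta>]
      vcmp_assoc[OF \<beta> vcmp_cell[OF \<alpha> \<beta>] \<alpha>] by simp
  then show ?thesis
    unfolding idempotent_2cell_def using retract vcmp_cell[OF \<beta> \<alpha>] by simp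
qed

lemma whiskered_counit_interchange:
  assumes W: "W \<in> Hom K a b" and F: "F \<in> Hom K a a" and \<epsilon>: "\<epsilon> \<in> Cell K F (ide K a)"
  shows "vcmp K (wl K W \<epsilon>) (wl K (cmp K W F) \<epsilon>) = vcmp K (wl K W \<epsilon>) (wr K (wl K W \<epsilon>) F)"
proof -
  have F\<epsilon>: "wl K F \<epsilon> \<in> Cell K (cmp K F F) F" using wl_counit_cell[OF F F \<epsilon>] .
  have \<epsilon>F: "wr K \<epsilon> F \<in> Cell K (cmp K F F) F" using wr_cell[OF F F \<epsilon>] cmp_ide_left[OF F] by simp
  have "vcmp K \<epsilon> (wl K F \<epsilon>) = vcmp K \<epsilon> (wr K \<epsilon> F)"
    using whisker_exchange[OF F F \<epsilon> \<epsilon>] wl_ide[OF F \<epsilon>] wr_ide[OF F \<epsilon>] by simp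
  then have "wl K W (vcmp K \<epsilon> (wl K F \<epsilon>)) = wl K W (vcmp K \<epsilon> (wr K \<epsilon> F))" by simp
  then show ?thesis
    using wl_vcmp[OF W cmp_hom[OF F F] F\<epsilon> \<epsilon>] wl_vcmp[OF W cmp_hom[OF F F] \<epsilon>F \<epsilon>]
      wl_cmp[OF W F F \<epsilon>] wl_wr[OF F F W \<epsilon>] by simp
qed

lemma monad_unit_absorb:
  assumes T: "monad K k t \<mu> \<eta>" and U: "U \<in> Hom K a k"
    and \<psi>: "\<psi> \<in> Cell K (cmp K t U) X" and \<phi>: "\<phi> \<in> Cell K (cmp K t X) X"
    and law: "vcmp K \<phi> (wl K t \<psi>) = vcmp K \<psi> (wr K \<mu> U)"
  shows "vcmp K \<phi> (vcmp K (wr K \<eta> X) \<psi>) = \<psi>"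
proof -
  have t: "t \<in> Hom K k k" and k: "ide K k \<in> Hom K k k" and \<mu>: "\<mu> \<in> Cell K (cmp K t t) t"
    and \<eta>: "\<eta> \<in> Cell K (ide K k) t" and unit: "vcmp K \<mu> (wr K \<eta> t) = idc K t"
    using T ide_hom unfolding monad_def by auto
  have tU: "cmp K t U \<in> Hom K a k" using cmp_hom[OF U t] .
  have ttU: "cmp K (cmp K t t) U = cmp K t (cmp K t U)" using cmp_assoc[OF U t t] by simp
  have \<eta>tU: "wr K (wr K \<eta> t) U \<in> Cell K (cmp K t U) (cmp K t (cmp K t U))"
    using wr_cell[OF U t wr_unit_cell[OF t \<eta>]] ttU by simp
  have \<mu>U: "wr K \<mu> U \<in> Cell K (cmp K t (cmp K t U)) (cmp K t U)"
    using wr_cell[OF U cmp_hom[OF t t] \<mu>] ttU by simp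
  have t\<psi>: "wl K t \<psi> \<in> Cell K (cmp K t (cmp K t U)) (cmp K t X)" using wl_cell[OF t tU \<psi>] .
  have "vcmp K (wr K \<eta> X) \<psi> = vcmp K (wl K t \<psi>) (wr K (wr K \<eta> t) U)"
    using whisker_exchange[OF tU k \<psi> \<eta>] wl_ide[OF tU \<psi>] wr_cmp[OF U t k \<eta>] by simp
  then have "vcmp K \<phi> (vcmp K (wr K \<eta> X) \<psi>) = vcmp K (vcmp K \<psi> (wr K \<mu> U)) (wr K (wr K \<eta> t) U)"
    using vcmp_assoc[OF \<eta>tU t\<psi> \<phi>] law by simp
  also have "\<dots> = vcmp K \<psi> (wr K (vcmp K \<mu> (wr K \<eta> t)) U)"
    using vcmp_assoc[OF \<eta>tU \<mu>U \<psi>] wr_vcmp[OF U t wr_unit_cell[OF t \<eta>] \<mu>] by simp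
  also have "\<dots> = \<psi>"
    using unit wr_idc[OF U t] vcmp_idc_right[OF \<psi>] by simp
  finally show ?thesis .
qed

lemma monad_action_unit:
  assumes T: "monad K k t \<mu> \<eta>" and W: "W \<in> Hom K a k"
    and \<theta>: "\<theta> \<in> Cell K (cmp K t W) W"
    and assoc: "vcmp K \<theta> (wl K t \<theta>) = vcmp K \<theta> (wr K \<mu> W)"
  shows "vcmp K \<theta> (vcmp K (wl K t \<theta>) (wl K t (wr K \<eta> W))) = \<theta>"
proof -
  have t: "t \<in> Hom K k k" and k: "ide K k \<in> Hom K k k" and \<mu>: "\<mu> \<in> Cell K (cmp K t t) t"
    and \<eta>: "\<eta> \<in> Cell K (ide K k) t" and unit: "vcmp K \<mu> (wl K t \<eta>) = idc K t"
    using T ide_hom unfolding monad_def by auto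
  have tW: "cmp K t W \<in> Hom K a k" using cmp_hom[OF W t] .
  have ttW: "cmp K (cmp K t t) W = cmp K t (cmp K t W)" using cmp_assoc[OF W t t] by simp
  have t\<eta>: "wl K t \<eta> \<in> Cell K t (cmp K t t)"
    using wl_cell[OF t k \<eta>] cmp_ide_right[OF t] by simp
  have t\<eta>W: "wr K (wl K t \<eta>) W \<in> Cell K (cmp K t W) (cmp K t (cmp K t W))"
    using wr_cell[OF W t t\<eta>] ttW by simp
  have \<mu>W: "wr K \<mu> W \<in> Cell K (cmp K t (cmp K t W)) (cmp K t W)"
    using wr_cell[OF W cmp_hom[OF t t] \<mu>] ttW by simp
  have t\<theta>: "wl K t \<theta> \<in> Cell K (cmp K t (cmp K t W)) (cmp K t W)"
    using wl_cell[OF t tW \<theta>] .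
  have "vcmp K \<theta> (vcmp K (wl K t \<theta>) (wl K t (wr K \<eta> W)))
      = vcmp K (vcmp K \<theta> (wr K \<mu> W)) (wr K (wl K t \<eta>) W)"
    using wl_wr[OF W k t \<eta>] vcmp_assoc[OF t\<eta>W t\<theta> \<theta>] assoc by simp
  also have "\<dots> = vcmp K \<theta> (wr K (vcmp K \<mu> (wl K t \<eta>)) W)"
    using vcmp_assoc[OF t\<eta>W \<mu>W \<theta>] wr_vcmp[OF W t t\<eta> \<mu>] by simp
  also have "\<dots> = \<theta>"
    using unit wr_idc[OF W t] vcmp_idc_right[OF \<theta>] by simp
  finally show ?thesis .
qed

lemma EMw_1cell_unit_absorb:
  assumes "EMw_1cell K k t \<mu> \<eta> k' t' \<mu>' \<eta>' V \<psi>"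
  shows "vcmp K (wl K V \<mu>) (vcmp K (wr K \<psi> t) (vcmp K (wr K \<eta>' (cmp K V t)) \<psi>)) = \<psi>"
proof -
  have T': "monad K k' t' \<mu>' \<eta>'" and V: "V \<in> Hom K k k'"
    and \<psi>: "\<psi> \<in> Cell K (cmp K t' V) (cmp K V t)"
    and law: "vcmp K (wl K V \<mu>) (vcmp K (wr K \<psi> t) (wl K t' \<psi>)) = vcmp K \<psi> (wr K \<mu>' V)"
    and t: "t \<in> Hom K k k" and \<mu>: "\<mu> \<in> Cell K (cmp K t t) t"
    and t': "t' \<in> Hom K k' k'" and \<eta>': "\<eta>' \<in> Cell K (ide K k') t'"
    using assms unfolding EMw_1cell_def monad_def by auto
  have tV: "cmp K t' V \<in> Hom K k k'" and Vt: "cmp K V t \<in> Hom K k k'"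
    using cmp_hom V t t' by blast+
  have V\<mu>: "wl K V \<mu> \<in> Cell K (cmp K V (cmp K t t)) (cmp K V t)"
    using wl_cell[OF V cmp_hom[OF t t] \<mu>] .
  have \<psi>t: "wr K \<psi> t \<in> Cell K (cmp K t' (cmp K V t)) (cmp K V (cmp K t t))"
    using wr_cell[OF t tV \<psi>] cmp_assoc[OF t V t'] cmp_assoc[OF t t V] by simp
  have t'\<psi>: "wl K t' \<psi> \<in> Cell K (cmp K t' (cmp K t' V)) (cmp K t' (cmp K V t))"
    using wl_cell[OF t' tV \<psi>] .
  have \<eta>'\<psi>: "vcmp K (wr K \<eta>' (cmp K V t)) \<psi> \<in> Cell K (cmp K t' V) (cmp K t' (cmp K V t))"
    using vcmp_cell[OF \<psi> wr_unit_cell[OF Vt \<eta>']] .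
  have "vcmp K (vcmp K (wl K V \<mu>) (wr K \<psi> t)) (vcmp K (wr K \<eta>' (cmp K V t)) \<psi>) = \<psi>"
  proof (rule monad_unit_absorb[OF T' V \<psi> vcmp_cell[OF \<psi>t V\<mu>]])
    show "vcmp K (vcmp K (wl K V \<mu>) (wr K \<psi> t)) (wl K t' \<psi>) = vcmp K \<psi> (wr K \<mu>' V)"
      using law vcmp_assoc[OF t'\<psi> \<psi>t V\<mu>] by simp
  qed
  then show ?thesis using vcmp_assoc[OF \<eta>'\<psi> \<psi>t V\<mu>] by simp
qed

end

locale EMw_1cell_over_counit = strict_2cat K
  for K :: "('o, 'm, 'c, 'x) two_cat_scheme" +
  fixes k k' j :: 'o and t t' V f v :: 'm and \<mu> \<eta> \<mu>' \<eta>' \<psi> \<epsilon> :: 'c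
  assumes EMw: "EMw_1cell K k t \<mu> \<eta> k' t' \<mu>' \<eta>' V \<psi>"
    and f: "f \<in> Hom K k j" and v: "v \<in> Hom K j k"
    and \<epsilon>: "\<epsilon> \<in> Cell K (cmp K f v) (ide K j)"
    and t_eq: "t = cmp K v f"
    and \<mu>_eq: "\<mu> = wr K (wl K v \<epsilon>) f"
begin

abbreviation W :: 'm where "W \<equiv> cmp K V v"
abbreviation F :: 'm where "F \<equiv> cmp K f v"
abbreviation \<theta> :: 'c where "\<theta> \<equiv> vcmp K (wl K W \<epsilon>) (wr K \<psi> v)"

lemma
  shows target_monad: "monad K k' t' \<mu>' \<eta>'"
    and V: "V \<in> Hom K k k'" and t: "t \<in> Hom K k k" and t': "t' \<in> Hom K k' k'"
    and \<mu>: "\<mu> \<in> Cell K (cmp K t t) t"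
    and \<psi>: "\<psi> \<in> Cell K (cmp K t' V) (cmp K V t)"
    and \<mu>': "\<mu>' \<in> Cell K (cmp K t' t') t'" and \<eta>': "\<eta>' \<in> Cell K (ide K k') t'"
    and EMw_law: "vcmp K (wl K V \<mu>) (vcmp K (wr K \<psi> t) (wl K t' \<psi>)) = vcmp K \<psi> (wr K \<mu>' V)"
  using EMw unfolding EMw_1cell_def monad_def by auto

lemma
  shows W: "W \<in> Hom K j k'" and F: "F \<in> Hom K j j"
    and t'W: "cmp K t' W \<in> Hom K j k'" and t'V: "cmp K t' V \<in> Hom K k k'"
  using cmp_hom f v V t' by blast+

lemma \<psi>v: "wr K \<psi> v \<in> Cell K (cmp K t' W) (cmp K W F)"
proof -
  have "cmp K (cmp K V t) v = cmp K W F"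
    using t_eq cmp_assoc[OF f v V] cmp_assoc[OF v f W] by simp
  then show ?thesis using wr_cell[OF v t'V \<psi>] cmp_assoc[OF v V t'] by simp
qed

lemma W\<epsilon>: "wl K W \<epsilon> \<in> Cell K (cmp K W F) W"
  using wl_counit_cell[OF W F \<epsilon>] .

lemma \<theta>_cell: "\<theta> \<in> Cell K (cmp K t' W) W"
  using vcmp_cell[OF \<psi>v W\<epsilon>] .

lemma EMw_law_whiskered:
  "vcmp K (wr K (wl K W \<epsilon>) F) (vcmp K (wr K (wr K \<psi> v) F) (wl K t' (wr K \<psi> v)))
   = vcmp K (wr K \<psi> v) (wr K \<mu>' W)"
proof -
  have t't'V: "cmp K t' (cmp K t' V) \<in> Hom K k k'" using cmp_hom[OF t'V t'] .
  have \<psi>t: "wr K \<psi> t \<in> Cell K (cmp K t' (cmp K V t)) (cmp K V (cmp K t t))"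
    using wr_cell[OF t t'V \<psi>] cmp_assoc[OF t V t'] cmp_assoc[OF t t V] by simp
  have t'\<psi>: "wl K t' \<psi> \<in> Cell K (cmp K t' (cmp K t' V)) (cmp K t' (cmp K V t))"
    using wl_cell[OF t' t'V \<psi>] .
  have V\<mu>: "wl K V \<mu> \<in> Cell K (cmp K V (cmp K t t)) (cmp K V t)"
    using wl_cell[OF V cmp_hom[OF t t] \<mu>] .
  have "wr K (wl K V \<mu>) v = wr K (wl K W \<epsilon>) F"
  proof -
    have "wl K V \<mu> = wr K (wl K W \<epsilon>) f"
      using \<mu>_eq wl_wr[OF f cmp_hom[OF F v] V wl_cell[OF v F \<epsilon>]] wl_cmp[OF V v F \<epsilon>] by simp
    then show ?thesis using wr_cmp[OF v f cmp_hom[OF F W] W\<epsilon>] by simp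
  qed
  moreover have "wr K (wr K \<psi> t) v = wr K (wr K \<psi> v) F"
    using wr_cmp[OF v t t'V \<psi>] wr_cmp[OF F v t'V \<psi>] t_eq cmp_assoc[OF v f v] by simp
  moreover have "wr K (wl K t' \<psi>) v = wl K t' (wr K \<psi> v)"
    using wl_wr[OF v t'V t' \<psi>] by simp
  moreover have "wr K (wr K \<mu>' V) v = wr K \<mu>' W"
    using wr_cmp[OF v V cmp_hom[OF t' t'] \<mu>'] by simp
  moreover have "wr K \<mu>' V \<in> Cell K (cmp K t' (cmp K t' V)) (cmp K t' V)"
    using wr_cell[OF V cmp_hom[OF t' t'] \<mu>'] cmp_assoc[OF V t' t'] by simp
  ultimately show ?thesis
    using arg_cong[OF EMw_law, of "\<lambda>\<alpha>. wr K \<alpha> v"] wr_vcmp[OF v t't'V vcmp_cell[OF t'\<psi> \<psi>t] V\<mu>]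
      wr_vcmp[OF v t't'V t'\<psi> \<psi>t] wr_vcmp[OF v t't'V _ \<psi>] by simp
qed

lemma \<theta>_assoc: "vcmp K \<theta> (wl K t' \<theta>) = vcmp K \<theta> (wr K \<mu>' W)"
proof -
  have t'W\<epsilon>: "wl K (cmp K t' W) \<epsilon> \<in> Cell K (cmp K (cmp K t' W) F) (cmp K t' W)"
    using wl_counit_cell[OF t'W F \<epsilon>] .
  have t'\<psi>v: "wl K t' (wr K \<psi> v) \<in> Cell K (cmp K t' (cmp K t' W)) (cmp K (cmp K t' W) F)"
    using wl_cell[OF t' t'W \<psi>v] cmp_assoc[OF F W t'] by simp
  have WF\<epsilon>: "wl K (cmp K W F) \<epsilon> \<in> Cell K (cmp K (cmp K W F) F) (cmp K W F)"
    using wl_counit_cell[OF cmp_hom[OF F W] F \<epsilon>] .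
  have \<psi>vF: "wr K (wr K \<psi> v) F \<in> Cell K (cmp K (cmp K t' W) F) (cmp K (cmp K W F) F)"
    using wr_cell[OF F t'W \<psi>v] .
  have W\<epsilon>F: "wr K (wl K W \<epsilon>) F \<in> Cell K (cmp K (cmp K W F) F) (cmp K W F)"
    using wr_cell[OF F cmp_hom[OF F W] W\<epsilon>] .
  have \<mu>'W: "wr K \<mu>' W \<in> Cell K (cmp K t' (cmp K t' W)) (cmp K t' W)"
    using wr_cell[OF W cmp_hom[OF t' t'] \<mu>'] cmp_assoc[OF W t' t'] by simp
  have \<psi>v_\<epsilon>: "vcmp K (wr K \<psi> v) (wl K (cmp K t' W) \<epsilon>)
      = vcmp K (wl K (cmp K W F) \<epsilon>) (wr K (wr K \<psi> v) F)"
    using whisker_exchange[OF F t'W \<epsilon> \<psi>v] wr_ide[OF t'W \<psi>v] by simp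
  have "vcmp K \<theta> (wl K t' \<theta>)
      = vcmp K (wl K W \<epsilon>) (vcmp K (wr K \<psi> v) (vcmp K (wl K (cmp K t' W) \<epsilon>) (wl K t' (wr K \<psi> v))))"
    using wl_vcmp[OF t' t'W \<psi>v W\<epsilon>] wl_cmp[OF t' W F \<epsilon>]
      vcmp_assoc[OF vcmp_cell[OF t'\<psi>v t'W\<epsilon>] \<psi>v W\<epsilon>] by simp
  also have "\<dots> = vcmp K (wl K W \<epsilon>) (vcmp K (wl K (cmp K W F) \<epsilon>)
                    (vcmp K (wr K (wr K \<psi> v) F) (wl K t' (wr K \<psi> v))))"
    using vcmp_assoc_subst[OF \<psi>v_\<epsilon> t'\<psi>v t'W\<epsilon> \<psi>v \<psi>vF WF\<epsilon>] by simp
  also have "\<dots> = vcmp K (wl K W \<epsilon>) (vcmp K (wr K (wl K W \<epsilon>) F)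
                    (vcmp K (wr K (wr K \<psi> v) F) (wl K t' (wr K \<psi> v))))"
    using vcmp_assoc_subst[OF whiskered_counit_interchange[OF W F \<epsilon>]
        vcmp_cell[OF t'\<psi>v \<psi>vF] WF\<epsilon> W\<epsilon> W\<epsilon>F W\<epsilon>] .
  also have "\<dots> = vcmp K \<theta> (wr K \<mu>' W)"
    using EMw_law_whiskered vcmp_assoc[OF \<mu>'W \<psi>v W\<epsilon>] by simp
  finally show ?thesis .
qed

lemma \<theta>_unit_idempotent:
  "idempotent_2cell K W (vcmp K (wl K W \<epsilon>) (vcmp K (wr K \<psi> v) (wr K \<eta>' W)))"
proof -
  have \<eta>'W: "wr K \<eta>' W \<in> Cell K W (cmp K t' W)" using wr_unit_cell[OF W \<eta>'] .
  have "idempotent_2cell K W (vcmp K \<theta> (wr K \<eta>' W))"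
    using idempotent_2cell_vcmp[OF \<theta>_cell \<eta>'W]
      monad_unit_absorb[OF target_monad W \<theta>_cell \<theta>_cell \<theta>_assoc] by blast
  then show ?thesis using vcmp_assoc[OF \<eta>'W \<psi>v W\<epsilon>] by simp
qed

lemma \<theta>_unit_law:
  "vcmp K (wl K W \<epsilon>) (vcmp K (wr K \<psi> v)
     (vcmp K (wl K (cmp K t' W) \<epsilon>) (vcmp K (wl K t' (wr K \<psi> v)) (wl K t' (wr K \<eta>' W)))))
   = \<theta>"
proof -
  have t'W\<epsilon>: "wl K (cmp K t' W) \<epsilon> \<in> Cell K (cmp K (cmp K t' W) F) (cmp K t' W)"
    using wl_counit_cell[OF t'W F \<epsilon>] .
  have t'\<psi>v: "wl K t' (wr K \<psi> v) \<in> Cell K (cmp K t' (cmp K t' W)) (cmp K (cmp K t' W) F)"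
    using wl_cell[OF t' t'W \<psi>v] cmp_assoc[OF F W t'] by simp
  have t'\<eta>'W: "wl K t' (wr K \<eta>' W) \<in> Cell K (cmp K t' W) (cmp K t' (cmp K t' W))"
    using wl_cell[OF t' W wr_unit_cell[OF W \<eta>']] .
  have t'\<theta>: "wl K t' \<theta> = vcmp K (wl K (cmp K t' W) \<epsilon>) (wl K t' (wr K \<psi> v))"
    using wl_vcmp[OF t' t'W \<psi>v W\<epsilon>] wl_cmp[OF t' W F \<epsilon>] by simp
  have "vcmp K (wl K W \<epsilon>) (vcmp K (wr K \<psi> v)
     (vcmp K (wl K (cmp K t' W) \<epsilon>) (vcmp K (wl K t' (wr K \<psi> v)) (wl K t' (wr K \<eta>' W)))))
   = vcmp K \<theta> (vcmp K (wl K t' \<theta>) (wl K t' (wr K \<eta>' W)))"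
    using t'\<theta> vcmp_assoc[OF t'\<eta>'W t'\<psi>v t'W\<epsilon>]
      vcmp_assoc[OF vcmp_cell[OF t'\<eta>'W vcmp_cell[OF t'\<psi>v t'W\<epsilon>]] \<psi>v W\<epsilon>] by simp
  also have "\<dots> = \<theta>"
    using monad_action_unit[OF target_monad W \<theta>_cell \<theta>_assoc] .
  finally show ?thesis .
qed

end

theorem lemma3p2:
  fixes K :: "('o, 'm, 'c) two_cat"
    and k k' j :: 'o and t t' V f v :: 'm and \<mu> \<eta> \<mu>' \<eta>' \<psi> \<epsilon> :: 'c
  assumes K: "two_category K"
    and cell: "EMw_1cell K k t \<mu> \<eta> k' t' \<mu>' \<eta>' V \<psi>"
    and adj: "adjunction K k j f v \<eta> \<epsilon>"
    and t_eq: "t = cmp K v f"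
    and mu_eq: "\<mu> = wr K (wl K v \<epsilon>) f"
  shows "idempotent_2cell K (cmp K V v)
           (vcmp K (wl K (cmp K V v) \<epsilon>) (vcmp K (wr K \<psi> v) (wr K \<eta>' (cmp K V v)))) \<and>
         vcmp K (wl K V \<mu>) (vcmp K (wr K \<psi> t) (vcmp K (wr K \<eta>' (cmp K V t)) \<psi>)) = \<psi> \<and>
         vcmp K (wl K (cmp K V v) \<epsilon>) (vcmp K (wr K \<psi> v)
           (vcmp K (wl K (cmp K t' (cmp K V v)) \<epsilon>)
           (vcmp K (wl K t' (wr K \<psi> v)) (wl K t' (wr K \<eta>' (cmp K V v))))))
         = vcmp K (wl K (cmp K V v) \<epsilon>) (wr K \<psi> v)"
proof -
  interpret EMw_1cell_over_counit K k k' j t t' V f v \<mu> \<eta> \<mu>' \<eta>' \<psi> \<epsilon>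
    using K cell adj t_eq mu_eq by unfold_locales (auto simp: adjunction_def)
  show ?thesis
    using \<theta>_unit_idempotent EMw_1cell_unit_absorb[OF cell] \<theta>_unit_law by blast
qed

end
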